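(* Let $\varepsilon\in\{1,-1\}$, $z\in\mathbb{Z}$, $F_k(z)=\varepsilon^kD_k(z)$, and $n\in\mathbb{Z}^+$. For every polynomial $x(k)\in\mathbb{Z}[k]$, $$\sum_{k=0}^{n-1}L^{*}(x(k))F_k(z)\equiv 0\pmod n,$$ where $L^{*}(x(k))=(k+1)x(k)-\varepsilon(2k+1)(2z+1)x(k-1)+k\,x(k-2)$.
   Context: $D_n(z)=\sum_{k=0}^{n}\binom{n}{k}\binom{n+k}{k}z^k$ (Delannoy polynomials). *)

theory Defs
  imports Main "HOL-Computational_Algebra.Polynomial"
begin

definition delannoy :: "nat \<Rightarrow> int \<Rightarrow> int" where
  "delannoy n z = (\<Sum>k = 0..n. int (n choose k) * int ((n + k) choose k) * z ^ k)"

definition Lstar :: "int \<Rightarrow> int \<Rightarrow> int poly \<Rightarrow> int \<Rightarrow> int" where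
  "Lstar eps z x k = (k + 1) * poly x k - eps * (2 * k + 1) * (2 * z + 1) * poly x (k - 1)
                     + k * poly x (k - 2)"

end

theory Submission
  imports Defs
begin

text \<open>
  The Delannoy polynomials satisfy the three-term recurrence
  \<open>(k + 1) D\<^sub>k\<^sub>+\<^sub>1 = (2z + 1)(2k + 1) D\<^sub>k - k D\<^sub>k\<^sub>-\<^sub>1\<close>, hence \<open>F\<^sub>k = \<epsilon>\<^sup>k D\<^sub>k\<close> satisfies it with
  \<open>\<epsilon>(2z + 1)\<close> in place of \<open>2z + 1\<close>. The operator \<open>L\<^sup>*\<close> is the adjoint of this recurrence, so
  summation by parts telescopes the sum to
  \<open>n (x(n - 1) F\<^sub>n\<^sub>-\<^sub>1 - x(n - 2) F\<^sub>n)\<close>, which is visibly divisible by \<open>n\<close>.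
  Nothing about \<open>x\<close> beyond its values at integers is used.
\<close>

definition delannoy_coeff :: "nat \<Rightarrow> nat \<Rightarrow> nat" where
  "delannoy_coeff n k = (n choose k) * ((n + k) choose k)"

lemma delannoy_coeff_eq_0: "n < k \<Longrightarrow> delannoy_coeff n k = 0"
  by (simp add: delannoy_coeff_def)

lemma delannoy_coeff_Suc_right:
  "(k + 1)\<^sup>2 * delannoy_coeff m (k + 1) = (m - k) * (m + k + 1) * delannoy_coeff m k"
proof -
  have "(k + 1) * (m choose (k + 1)) = (m - k) * (m choose k)"
    using binomial_absorption[of k m] binomial_absorb_comp[of m k] by simp
  moreover have "(k + 1) * ((m + (k + 1)) choose (k + 1)) = (m + k + 1) * ((m + k) choose k)"
    using Suc_times_binomial[of k "m + k"] by simp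
  ultimately show ?thesis
    unfolding delannoy_coeff_def power2_eq_square by (metis mult.assoc mult.left_commute)
qed

lemma delannoy_coeff_Suc_left:
  "(m + 1 - k) * delannoy_coeff (m + 1) k = (m + k + 1) * delannoy_coeff m k"
proof -
  have first: "(m + 1 - k) * ((m + 1) choose k) = (m + 1) * (m choose k)"
    using binomial_absorb_comp[of "m + 1" k] by simp
  have "(m + 1) * ((m + 1 + k) choose k) = Suc m * (Suc (m + k) choose Suc m)"
    using binomial_symmetric[of k "Suc (m + k)"] by simp
  also have "\<dots> = Suc (m + k) * ((m + k) choose m)"
    by (rule Suc_times_binomial)
  also have "\<dots> = (m + k + 1) * ((m + k) choose k)"
    using binomial_symmetric[of m "m + k"] by simp
  finally have second: "(m + 1) * ((m + 1 + k) choose k) = (m + k + 1) * ((m + k) choose k)" .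
  have "(m + 1) * ((m + 1 - k) * delannoy_coeff (m + 1) k)
      = ((m + 1 - k) * ((m + 1) choose k)) * ((m + 1) * ((m + 1 + k) choose k))"
    by (simp only: delannoy_coeff_def mult_ac)
  also have "\<dots> = (m + 1) * ((m + k + 1) * delannoy_coeff m k)"
    unfolding first second by (simp only: delannoy_coeff_def mult_ac)
  finally show ?thesis
    by (simp only: mult_cancel1) simp
qed

lemma delannoy_coeff_recurrence_le:
  assumes "k \<le> n"
  shows "int (n + 2) * delannoy_coeff (n + 2) (k + 1) - int (2 * n + 3) * delannoy_coeff (n + 1) (k + 1)
     + int (n + 1) * delannoy_coeff n (k + 1) = 2 * int (2 * n + 3) * delannoy_coeff (n + 1) k"
    (is "?lhs = ?rhs")
proof -
  obtain p where n: "n = k + p"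
    using assms le_Suc_ex by blast
  define A B C E where "A = int (delannoy_coeff (n + 2) (k + 1))"
    and "B = int (delannoy_coeff (n + 1) (k + 1))" and "C = int (delannoy_coeff (n + 1) k)"
    and "E = int (delannoy_coeff n (k + 1))"
  have rA: "(int p + 1) * A = (2 * int k + int p + 3) * B"
    using arg_cong[OF delannoy_coeff_Suc_left[of "n + 1" "k + 1"], of int]
    unfolding A_def B_def n by (simp add: algebra_simps)
  have rE: "int p * B = (2 * int k + int p + 2) * E"
    using arg_cong[OF delannoy_coeff_Suc_left[of n "k + 1"], of int]
    unfolding B_def E_def n by (simp add: algebra_simps)
  have rC: "(int k + 1)\<^sup>2 * B = (int p + 1) * (2 * int k + int p + 2) * C"
    using arg_cong[OF delannoy_coeff_Suc_right[of k "n + 1"], of int]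
    unfolding B_def C_def n by (simp add: algebra_simps)
  have lhs: "?lhs = (int k + int p + 2) * A - (2 * int k + 2 * int p + 3) * B + (int k + int p + 1) * E"
    unfolding A_def B_def E_def n by (simp add: algebra_simps)
  have rhs: "?rhs = 2 * (2 * int k + 2 * int p + 3) * C"
    unfolding C_def n by simp
  \<comment> \<open>All four coefficients are multiples of \<open>B\<close>; clearing the denominators leaves a polynomial identity in \<open>k\<close>, \<open>p\<close>.\<close>
  have "(int p + 1) * (2 * int k + int p + 2) * ?lhs = (int p + 1) * (2 * int k + int p + 2) * ?rhs"
    unfolding lhs rhs using rA rE rC by algebra
  then show ?thesis by simp
qed

lemma delannoy_coeff_diag_Suc:
  "(n + 2) * delannoy_coeff (n + 2) (n + 2) = 2 * (2 * n + 3) * delannoy_coeff (n + 1) (n + 1)"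
proof -
  have "(n + 2) * ((n + 2) * delannoy_coeff (n + 2) (n + 2)) = (n + 2)\<^sup>2 * delannoy_coeff (n + 2) (n + 2)"
    by (simp only: power2_eq_square mult.assoc)
  also have "\<dots> = 2 * (n + 2) * delannoy_coeff (n + 2) (n + 1)"
    using delannoy_coeff_Suc_right[of "n + 1" "n + 2"] by (simp add: algebra_simps)
  also have "\<dots> = (n + 2) * (2 * (2 * n + 3) * delannoy_coeff (n + 1) (n + 1))"
    using delannoy_coeff_Suc_left[of "n + 1" "n + 1"] by (simp add: algebra_simps)
  finally show ?thesis
    by (subst (asm) mult_left_cancel) simp_all
qed

lemma delannoy_coeff_recurrence:
  "int (n + 2) * delannoy_coeff (n + 2) (k + 1) - int (2 * n + 3) * delannoy_coeff (n + 1) (k + 1)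
     + int (n + 1) * delannoy_coeff n (k + 1) = 2 * int (2 * n + 3) * delannoy_coeff (n + 1) k"
proof -
  consider "k \<le> n" | "k = n + 1" | "n + 1 < k" by linarith
  then show ?thesis
  proof cases
    case 1
    then show ?thesis by (rule delannoy_coeff_recurrence_le)
  next
    case 2
    have "int (n + 2) * delannoy_coeff (n + 2) (n + 2) = 2 * int (2 * n + 3) * delannoy_coeff (n + 1) (n + 1)"
      using delannoy_coeff_diag_Suc by (metis of_nat_mult of_nat_numeral)
    with 2 show ?thesis by (simp add: delannoy_coeff_eq_0)
  qed (simp add: delannoy_coeff_eq_0)
qed

lemma delannoy_eq_sum_atMost:
  assumes "m \<le> N"
  shows "delannoy m z = (\<Sum>k\<le>N. int (delannoy_coeff m k) * z ^ k)"
proof -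
  have "delannoy m z = (\<Sum>k\<le>m. int (delannoy_coeff m k) * z ^ k)"
    by (simp add: delannoy_def delannoy_coeff_def atLeast0AtMost)
  also have "\<dots> = (\<Sum>k\<le>N. int (delannoy_coeff m k) * z ^ k)"
    using assms by (intro sum.mono_neutral_left) (auto simp: delannoy_coeff_eq_0)
  finally show ?thesis .
qed

lemma delannoy_Suc_Suc:
  "int (n + 2) * delannoy (n + 2) z
     = (2 * z + 1) * int (2 * n + 3) * delannoy (n + 1) z - int (n + 1) * delannoy n z"
proof -
  define g where "g k = int (n + 2) * delannoy_coeff (n + 2) k - int (2 * n + 3) * delannoy_coeff (n + 1) k
     + int (n + 1) * delannoy_coeff n k" for k
  have g_0: "g 0 = 0"
    by (simp add: g_def delannoy_coeff_def)
  have g_Suc: "g (Suc k) = 2 * int (2 * n + 3) * delannoy_coeff (n + 1) k" for k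
    using delannoy_coeff_recurrence[of n k] by (simp add: g_def)
  have "int (n + 2) * delannoy (n + 2) z - int (2 * n + 3) * delannoy (n + 1) z + int (n + 1) * delannoy n z
      = (\<Sum>k\<le>Suc (n + 1). g k * z ^ k)"
    by (simp add: delannoy_eq_sum_atMost[of _ "n + 2"] g_def sum_distrib_left sum_subtractf
        sum.distrib algebra_simps)
  also have "\<dots> = (\<Sum>k\<le>n + 1. g (Suc k) * z ^ Suc k)"
    using g_0 by (simp only: sum.atMost_Suc_shift)
  also have "\<dots> = 2 * z * int (2 * n + 3) * (\<Sum>k\<le>n + 1. int (delannoy_coeff (n + 1) k) * z ^ k)"
    unfolding g_Suc sum_distrib_left by (intro sum.cong) (simp_all add: mult_ac)
  also have "\<dots> = 2 * z * int (2 * n + 3) * delannoy (n + 1) z"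
    by (simp only: delannoy_eq_sum_atMost[of "n + 1" "n + 1"] order_refl)
  finally show ?thesis by (simp add: algebra_simps)
qed

lemma delannoy_recurrence:
  "int (Suc k) * delannoy (Suc k) z = (2 * z + 1) * int (2 * k + 1) * delannoy k z - int k * delannoy (k - 1) z"
proof (cases k)
  case 0
  then show ?thesis by (simp add: delannoy_def)
next
  case (Suc n)
  then show ?thesis using delannoy_Suc_Suc[of n z] by (simp add: algebra_simps)
qed

lemma signed_recurrence:
  fixes eps c :: "'a :: comm_ring_1"
  assumes "eps\<^sup>2 = 1"
    and "\<And>k. of_nat (Suc k) * F (Suc k) = c * of_nat (2 * k + 1) * F k - of_nat k * F (k - 1)"
  shows "of_nat (Suc k) * (eps ^ Suc k * F (Suc k))
    = eps * c * of_nat (2 * k + 1) * (eps ^ k * F k) - of_nat k * (eps ^ (k - 1) * F (k - 1))"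
proof -
  have sign: "of_nat k * (eps ^ Suc k * F (k - 1)) = of_nat k * (eps ^ (k - 1) * F (k - 1))"
  proof (cases k)
    case (Suc m)
    then have "eps ^ Suc k = eps ^ (k - 1) * eps\<^sup>2"
      by (simp add: power2_eq_square mult_ac)
    then show ?thesis by (simp add: assms(1))
  qed simp
  have "of_nat (Suc k) * (eps ^ Suc k * F (Suc k)) = eps ^ Suc k * (of_nat (Suc k) * F (Suc k))"
    by (simp only: mult_ac)
  also have "\<dots> = eps ^ Suc k * (c * of_nat (2 * k + 1) * F k - of_nat k * F (k - 1))"
    by (simp only: assms(2))
  also have "\<dots> = eps * c * of_nat (2 * k + 1) * (eps ^ k * F k) - of_nat k * (eps ^ Suc k * F (k - 1))"
    by (simp add: algebra_simps)
  finally show ?thesis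
    unfolding sign .
qed

lemma adjoint_recurrence_telescope:
  fixes c :: "'a :: comm_ring_1" and p :: "int \<Rightarrow> 'a"
  assumes "\<And>k. of_nat (Suc k) * F (Suc k) = c * of_nat (2 * k + 1) * F k - of_nat k * F (k - 1)"
  shows "(\<Sum>k<N. (of_nat (k + 1) * p (int k) - c * of_nat (2 * k + 1) * p (int k - 1)
              + of_nat k * p (int k - 2)) * F k)
    = of_nat N * (p (int N - 1) * F (N - 1) - p (int N - 2) * F N)"
proof (induction N)
  case 0
  then show ?case by simp
next
  case (Suc N)
  have "(\<Sum>k<Suc N. (of_nat (k + 1) * p (int k) - c * of_nat (2 * k + 1) * p (int k - 1)
              + of_nat k * p (int k - 2)) * F k)
      = of_nat N * (p (int N - 1) * F (N - 1) - p (int N - 2) * F N)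
        + (of_nat (N + 1) * p (int N) - c * of_nat (2 * N + 1) * p (int N - 1) + of_nat N * p (int N - 2)) * F N"
    using Suc.IH by simp
  also have "\<dots> = of_nat (N + 1) * p (int N) * F N
      - p (int N - 1) * (c * of_nat (2 * N + 1) * F N - of_nat N * F (N - 1))"
    by (simp add: algebra_simps)
  also have "\<dots> = of_nat (Suc N) * (p (int (Suc N) - 1) * F (Suc N - 1) - p (int (Suc N) - 2) * F (Suc N))"
    unfolding assms[of N, symmetric] by (simp add: algebra_simps)
  finally show ?case .
qed

theorem corollary2p3:
  fixes eps z :: int and n :: nat and x :: "int poly"
  assumes "eps \<in> {1, -1}" and "n > 0"
  shows "int n dvd (\<Sum>k<n. Lstar eps z x (int k) * (eps ^ k * delannoy k z))"
proof -
  have "eps\<^sup>2 = 1" using assms(1) by auto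
  have "(\<Sum>k<n. Lstar eps z x (int k) * (eps ^ k * delannoy k z))
      = int n * (poly x (int n - 1) * (eps ^ (n - 1) * delannoy (n - 1) z) - poly x (int n - 2) * (eps ^ n * delannoy n z))"
    using adjoint_recurrence_telescope[of "\<lambda>k. eps ^ k * delannoy k z" "eps * (2 * z + 1)" "poly x" n,
        OF signed_recurrence[OF \<open>eps\<^sup>2 = 1\<close> delannoy_recurrence]]
    by (simp add: Lstar_def algebra_simps)
  then show ?thesis by simp
qed

end
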